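(* Let $\theta:\Omega A\to\Omega B$ be a map of differential graded algebras, let $M$ be a right $A$-module and $\nabla_0:\mathrm{Hom}_A(\Omega^1A,M)\to M$ a hom-connection. View $B$ and $\Omega^1B$ as $A$-bimodules via $\theta$, regard $\mathrm{Hom}_A(B,M)$ as a right $B$-module by $(gb)(b')=g(bb')$, and identify $\mathrm{Hom}_B(\Omega^1B,\mathrm{Hom}_A(B,M))\cong\mathrm{Hom}_A(\Omega^1B,M)$ via $f\mapsto(\omega\mapsto f(\omega)(1))$. For $b\in B$ let $\ell_b:\Omega^1B\to\Omega^1B$, $\omega\mapsto b\omega$. Then the formula $$\nabla_0^\theta(f)(b):=\nabla_0(f\circ\ell_b\circ\theta)-f(db),\qquad f\in\mathrm{Hom}_A(\Omega^1B,M),\ b\in B,$$ (where $f\circ\ell_b\circ\theta$ is restricted to $\Omega^1A$) defines a hom-connection $\nabla^\theta_0:\mathrm{Hom}_B(\Omega^1B,\mathrm{Hom}_A(B,M))\to\mathrm{Hom}_A(B,M)$ on the right $B$-module $\mathrm{Hom}_A(B,M)$ with respect to $\Omega B$.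
   Context: All algebras are associative and unital over a field $k$. A differential graded algebra $\Omega A=\bigoplus_{n\ge0}\Omega^nA$ over $A=\Omega^0A$ has a degree-one differential $d$ with $d^2=0$ satisfying the graded Leibniz rule; a map of differential graded algebras is a degree-preserving unital algebra map commuting with the differentials. $\mathrm{Hom}_A$ denotes right $A$-linear maps. For a right $A$-module $P$, $\mathrm{Hom}_A(\Omega^1A,P)$ is a right $A$-module via $(fa)(\omega)=f(a\omega)$. A (right) hom-connection on $P$ with respect to $\Omega A$ is a $k$-linear map $\nabla_0:\mathrm{Hom}_A(\Omega^1A,P)\to P$ with $\nabla_0(fa)=\nabla_0(f)a+f(da)$ for all $f$ and $a\in A$; analogously for right $B$-modules with respect to $\Omega B$. *)

theory Defs
  imports Main "HOL-Library.Function_Algebras"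
begin

text \<open>The whole algebra
  Omega A is the type 'w (a ring); sm is the k-scalar action, Om n is the degree-n
  piece Omega^n A, and d the differential.  Omega A is the internal direct sum of
  the Om n; A = Om 0.\<close>
definition dga :: "('k::field \<Rightarrow> 'w::ring_1 \<Rightarrow> 'w) \<Rightarrow> (nat \<Rightarrow> 'w set) \<Rightarrow> ('w \<Rightarrow> 'w) \<Rightarrow> bool" where
  "dga sm Om d \<longleftrightarrow>
     \<comment> \<open>associative unital k-algebra\<close>
     (\<forall>c x y. sm c (x + y) = sm c x + sm c y) \<and>
     (\<forall>c e x. sm (c + e) x = sm c x + sm e x) \<and>
     (\<forall>c e x. sm (c * e) x = sm c (sm e x)) \<and>
     (\<forall>x. sm 1 x = x) \<and>
     (\<forall>c x y. sm c (x * y) = sm c x * y \<and> sm c (x * y) = x * sm c y) \<and>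
     \<comment> \<open>grading: k-subspaces, multiplicative, unit in degree 0, direct sum\<close>
     (\<forall>n. 0 \<in> Om n \<and> (\<forall>x\<in>Om n. \<forall>y\<in>Om n. x + y \<in> Om n) \<and> (\<forall>c. \<forall>x\<in>Om n. sm c x \<in> Om n)) \<and>
     (\<forall>m n. \<forall>x\<in>Om m. \<forall>y\<in>Om n. x * y \<in> Om (m + n)) \<and>
     1 \<in> Om 0 \<and>
     (\<forall>x. \<exists>!c::nat \<Rightarrow> 'w. finite {n. c n \<noteq> 0} \<and> (\<forall>n. c n \<in> Om n) \<and>
            x = (\<Sum>n\<in>{n. c n \<noteq> 0}. c n)) \<and>
     \<comment> \<open>differential: k-linear, degree one, square zero, graded Leibniz rule\<close>
     (\<forall>x y. d (x + y) = d x + d y) \<and>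
     (\<forall>c x. d (sm c x) = sm c (d x)) \<and>
     (\<forall>n. \<forall>x\<in>Om n. d x \<in> Om (Suc n)) \<and>
     (\<forall>x. d (d x) = 0) \<and>
     (\<forall>n. \<forall>x\<in>Om n. \<forall>y. d (x * y) = d x * y + (-1) ^ n * x * d y)"

definition dga_map ::
  "('k::field \<Rightarrow> 'w::ring_1 \<Rightarrow> 'w) \<Rightarrow> (nat \<Rightarrow> 'w set) \<Rightarrow> ('w \<Rightarrow> 'w) \<Rightarrow>
   ('k \<Rightarrow> 'v::ring_1 \<Rightarrow> 'v) \<Rightarrow> (nat \<Rightarrow> 'v set) \<Rightarrow> ('v \<Rightarrow> 'v) \<Rightarrow> ('w \<Rightarrow> 'v) \<Rightarrow> bool" where
  "dga_map smA OmA dA smB OmB dB th \<longleftrightarrow>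
     (\<forall>x y. th (x + y) = th x + th y) \<and>
     (\<forall>c x. th (smA c x) = smB c (th x)) \<and>
     (\<forall>x y. th (x * y) = th x * th y) \<and>
     th 1 = 1 \<and>
     (\<forall>n. \<forall>x\<in>OmA n. th x \<in> OmB n) \<and>
     (\<forall>x. th (dA x) = dB (th x))"

definition right_module :: "'w::ring_1 set \<Rightarrow> ('m::ab_group_add \<Rightarrow> 'w \<Rightarrow> 'm) \<Rightarrow> bool" where
  "right_module R act \<longleftrightarrow>
     (\<forall>m m'. \<forall>a\<in>R. act (m + m') a = act m a + act m' a) \<and>
     (\<forall>m. \<forall>a\<in>R. \<forall>a'\<in>R. act m (a + a') = act m a + act m a') \<and>
     (\<forall>m. \<forall>a\<in>R. \<forall>a'\<in>R. act m (a * a') = act (act m a) a') \<and>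
     (\<forall>m. act m 1 = m)"

text \<open>Hom_R(N, P): right R-linear maps from the module with carrier N (action actN)
  to the module with carrier P (action actP); maps are taken extensional
  (zero outside N) so that they are determined by their values on N.\<close>
definition homR ::
  "'w set \<Rightarrow> 'n::ab_group_add set \<Rightarrow> ('n \<Rightarrow> 'w \<Rightarrow> 'n) \<Rightarrow>
   'p::ab_group_add set \<Rightarrow> ('p \<Rightarrow> 'w \<Rightarrow> 'p) \<Rightarrow> ('n \<Rightarrow> 'p) set" where
  "homR R N actN P actP =
     {f. (\<forall>x\<in>N. f x \<in> P) \<and>
         (\<forall>x\<in>N. \<forall>y\<in>N. f (x + y) = f x + f y) \<and>
         (\<forall>x\<in>N. \<forall>a\<in>R. f (actN x a) = actP (f x) a) \<and>
         (\<forall>x. x \<notin> N \<longrightarrow> f x = 0)}"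

text \<open>Hom(Omega^1, P) is a right module via
  (f a)(w) = f(a w); its k-structure is via c |-> c 1 in Omega^0.\<close>
definition hom_connection ::
  "('k::field \<Rightarrow> 'w::ring_1 \<Rightarrow> 'w) \<Rightarrow> (nat \<Rightarrow> 'w set) \<Rightarrow> ('w \<Rightarrow> 'w) \<Rightarrow>
   'p::ab_group_add set \<Rightarrow> ('p \<Rightarrow> 'w \<Rightarrow> 'p) \<Rightarrow> (('w \<Rightarrow> 'p) \<Rightarrow> 'p) \<Rightarrow> bool" where
  "hom_connection sm Om d P actP nab \<longleftrightarrow>
     (let H = homR (Om 0) (Om 1) (\<lambda>w a. w * a) P actP in
       (\<forall>f\<in>H. nab f \<in> P) \<and>
       (\<forall>f\<in>H. \<forall>g\<in>H. nab (f + g) = nab f + nab g) \<and>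
       (\<forall>c. \<forall>f\<in>H. nab (\<lambda>w. actP (f w) (sm c 1)) = actP (nab f) (sm c 1)) \<and>
       (\<forall>f\<in>H. \<forall>a\<in>Om 0.
          nab (\<lambda>w. if w \<in> Om 1 then f (a * w) else 0) = actP (nab f) a + f (d a)))"

definition homAB_act :: "'v::ring_1 set \<Rightarrow> ('v \<Rightarrow> 'm::ab_group_add) \<Rightarrow> 'v \<Rightarrow> ('v \<Rightarrow> 'm)" where
  "homAB_act B g b = (\<lambda>b'. if b' \<in> B then g (b * b') else 0)"

definition ident :: "('v::ring_1 \<Rightarrow> 'v \<Rightarrow> 'm) \<Rightarrow> ('v \<Rightarrow> 'm)" where
  "ident F = (\<lambda>w. F w 1)"

definition nabla_theta ::
  "(nat \<Rightarrow> 'w::ring_1 set) \<Rightarrow> (nat \<Rightarrow> 'v::ring_1 set) \<Rightarrow> ('v \<Rightarrow> 'v) \<Rightarrow> ('w \<Rightarrow> 'v) \<Rightarrow>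
   (('w \<Rightarrow> 'm::ab_group_add) \<Rightarrow> 'm) \<Rightarrow> ('v \<Rightarrow> 'm) \<Rightarrow> ('v \<Rightarrow> 'm)" where
  "nabla_theta OmA OmB dB th nab0 f =
     (\<lambda>b. if b \<in> OmB 0
          then nab0 (\<lambda>w. if w \<in> OmA 1 then f (b * th w) else 0) - f (dB b)
          else 0)"

end

theory Submission
  imports Defs
begin

(* For F in Hom_B(Omega^1 B, Hom_A(B,M)) let f = ident F, i.e. f(w) = F w 1.  Since f is
   right A-linear through theta, the form f o l_b o theta lies in Hom_A(Omega^1 A, M), so
   nabla0 applies to it, and each hom-connection axiom for nabla^theta reduces to the same
   axiom for nabla0.  For A-linearity, the Leibniz rule in Omega B splits f(d(b theta(a)))
   into f(db) a + f(b d(theta a)); the first summand is absorbed by A-linearity of f, and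
   since d(theta a) = theta(da) the second is (f o l_b o theta)(da), which cancels the extra
   term produced by the Leibniz rule of nabla0.  The Leibniz rule over B comes in the same
   way from d(b' b) = (db') b + b' db. *)

lemma dga_algebra_axioms:
  assumes "dga sm Om d"
  shows "(\<forall>c x y. sm c (x * y) = sm c x * y \<and> sm c (x * y) = x * sm c y) \<and>
    (\<forall>n. 0 \<in> Om n \<and> (\<forall>x\<in>Om n. \<forall>y\<in>Om n. x + y \<in> Om n) \<and> (\<forall>c. \<forall>x\<in>Om n. sm c x \<in> Om n)) \<and>
    (\<forall>m n. \<forall>x\<in>Om m. \<forall>y\<in>Om n. x * y \<in> Om (m + n)) \<and> 1 \<in> Om 0 \<and>
    (\<forall>x y. d (x + y) = d x + d y) \<and> (\<forall>c x. d (sm c x) = sm c (d x)) \<and>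
    (\<forall>n. \<forall>x\<in>Om n. d x \<in> Om (Suc n)) \<and>
    (\<forall>n. \<forall>x\<in>Om n. \<forall>y. d (x * y) = d x * y + (-1) ^ n * x * d y)"
  using assms unfolding dga_def by (elim conjE) (intro conjI; assumption)

lemma dga_add_closed: "dga sm Om d \<Longrightarrow> x \<in> Om n \<Longrightarrow> y \<in> Om n \<Longrightarrow> x + y \<in> Om n"
  using dga_algebra_axioms[of sm Om d] by blast

lemma dga_mult_closed: "dga sm Om d \<Longrightarrow> x \<in> Om m \<Longrightarrow> y \<in> Om n \<Longrightarrow> x * y \<in> Om (m + n)"
  using dga_algebra_axioms[of sm Om d] by blast

lemma dga_mult_closed_0_1: "dga sm Om d \<Longrightarrow> x \<in> Om 0 \<Longrightarrow> y \<in> Om 1 \<Longrightarrow> x * y \<in> Om 1"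
  using dga_mult_closed[of sm Om d x 0 y 1] by simp

lemma dga_mult_closed_1_0: "dga sm Om d \<Longrightarrow> x \<in> Om 1 \<Longrightarrow> y \<in> Om 0 \<Longrightarrow> x * y \<in> Om 1"
  using dga_mult_closed[of sm Om d x 1 y 0] by simp

lemma dga_mult_closed_0_0: "dga sm Om d \<Longrightarrow> x \<in> Om 0 \<Longrightarrow> y \<in> Om 0 \<Longrightarrow> x * y \<in> Om 0"
  using dga_mult_closed[of sm Om d x 0 y 0] by simp

lemma dga_one_mem: "dga sm Om d \<Longrightarrow> 1 \<in> Om 0"
  using dga_algebra_axioms[of sm Om d] by blast

lemma dga_scalar_one_mem: "dga sm Om d \<Longrightarrow> sm c 1 \<in> Om 0"
  using dga_algebra_axioms[of sm Om d] by blast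

lemma dga_scalar_eq_mult_left: "dga sm Om d \<Longrightarrow> sm c x = sm c 1 * x"
  using dga_algebra_axioms[of sm Om d] by (metis mult_1_left)

lemma dga_scalar_eq_mult_right: "dga sm Om d \<Longrightarrow> sm c x = x * sm c 1"
  using dga_algebra_axioms[of sm Om d] by (metis mult_1_right)

lemma dga_d_add: "dga sm Om d \<Longrightarrow> d (x + y) = d x + d y"
  using dga_algebra_axioms[of sm Om d] by blast

lemma dga_d_scalar: "dga sm Om d \<Longrightarrow> d (sm c x) = sm c (d x)"
  using dga_algebra_axioms[of sm Om d] by blast

lemma dga_d_mem_1: "dga sm Om d \<Longrightarrow> x \<in> Om 0 \<Longrightarrow> d x \<in> Om 1"
  using dga_algebra_axioms[of sm Om d] by (metis One_nat_def)

lemma dga_Leibniz_0: "dga sm Om d \<Longrightarrow> x \<in> Om 0 \<Longrightarrow> d (x * y) = d x * y + x * d y"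
  using dga_algebra_axioms[of sm Om d] by (metis mult_1 power_0)

lemma dga_map_add: "dga_map smA OmA dA smB OmB dB th \<Longrightarrow> th (x + y) = th x + th y"
  unfolding dga_map_def by blast

lemma dga_map_mult: "dga_map smA OmA dA smB OmB dB th \<Longrightarrow> th (x * y) = th x * th y"
  unfolding dga_map_def by blast

lemma dga_map_mem: "dga_map smA OmA dA smB OmB dB th \<Longrightarrow> x \<in> OmA n \<Longrightarrow> th x \<in> OmB n"
  unfolding dga_map_def by blast

lemma dga_map_d: "dga_map smA OmA dA smB OmB dB th \<Longrightarrow> th (dA x) = dB (th x)"
  unfolding dga_map_def by blast

lemma right_module_act_add: "right_module R act \<Longrightarrow> a \<in> R \<Longrightarrow> act (m + m') a = act m a + act m' a"
  unfolding right_module_def by blast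

lemma right_module_act_diff: "right_module R act \<Longrightarrow> a \<in> R \<Longrightarrow> act (m - m') a = act m a - act m' a"
  using right_module_act_add[of R act a "m - m'" m'] by (simp add: algebra_simps)

lemma hom_connection_add:
  "hom_connection sm Om d P actP nab \<Longrightarrow>
    f \<in> homR (Om 0) (Om 1) (\<lambda>w a. w * a) P actP \<Longrightarrow> g \<in> homR (Om 0) (Om 1) (\<lambda>w a. w * a) P actP \<Longrightarrow>
    nab (f + g) = nab f + nab g"
  unfolding hom_connection_def Let_def by blast

lemma hom_connection_Leibniz:
  "hom_connection sm Om d P actP nab \<Longrightarrow>
    f \<in> homR (Om 0) (Om 1) (\<lambda>w a. w * a) P actP \<Longrightarrow> a \<in> Om 0 \<Longrightarrow>
    nab (\<lambda>w. if w \<in> Om 1 then f (a * w) else 0) = actP (nab f) a + f (d a)"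
  unfolding hom_connection_def Let_def by blast

definition pullback_form :: "(nat \<Rightarrow> 'w::ring_1 set) \<Rightarrow> ('w \<Rightarrow> 'v::ring_1) \<Rightarrow> ('v \<Rightarrow> 'm::zero) \<Rightarrow> 'v \<Rightarrow> 'w \<Rightarrow> 'm"
  where "pullback_form OmA th f b = (\<lambda>w. if w \<in> OmA 1 then f (b * th w) else 0)"

lemma homAB_act_apply: "b' \<in> B \<Longrightarrow> homAB_act B g b b' = g (b * b')"
  unfolding homAB_act_def by simp

lemma homAB_act_outside: "b' \<notin> B \<Longrightarrow> homAB_act B g b b' = 0"
  unfolding homAB_act_def by simp

locale induced_hom_connection =
  fixes smA :: "'k::field \<Rightarrow> 'w::ring_1 \<Rightarrow> 'w" and OmA :: "nat \<Rightarrow> 'w set" and dA :: "'w \<Rightarrow> 'w"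
    and smB :: "'k \<Rightarrow> 'v::ring_1 \<Rightarrow> 'v" and OmB :: "nat \<Rightarrow> 'v set" and dB :: "'v \<Rightarrow> 'v"
    and th :: "'w \<Rightarrow> 'v"
    and act :: "'m::ab_group_add \<Rightarrow> 'w \<Rightarrow> 'm"
    and nab0 :: "('w \<Rightarrow> 'm) \<Rightarrow> 'm"
  assumes dga_A: "dga smA OmA dA"
    and dga_B: "dga smB OmB dB"
    and dga_map_th: "dga_map smA OmA dA smB OmB dB th"
    and module_M: "right_module (OmA 0) act"
    and hom_connection_nab0: "hom_connection smA OmA dA UNIV act nab0"
begin

abbreviation HomA :: "('w \<Rightarrow> 'm) set"
  where "HomA \<equiv> homR (OmA 0) (OmA 1) (\<lambda>w a. w * a) UNIV act"

abbreviation HomAB :: "('v \<Rightarrow> 'm) set"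
  where "HomAB \<equiv> homR (OmA 0) (OmB 0) (\<lambda>b a. b * th a) UNIV act"

abbreviation HomB :: "('v \<Rightarrow> 'v \<Rightarrow> 'm) set"
  where "HomB \<equiv> homR (OmB 0) (OmB 1) (\<lambda>w a. w * a) HomAB (homAB_act (OmB 0))"

abbreviation nabla :: "('v \<Rightarrow> 'v \<Rightarrow> 'm) \<Rightarrow> 'v \<Rightarrow> 'm"
  where "nabla F \<equiv> nabla_theta OmA OmB dB th nab0 (ident F)"

lemma nabla_eq: "b \<in> OmB 0 \<Longrightarrow> nabla F b = nab0 (pullback_form OmA th (ident F) b) - ident F (dB b)"
  unfolding nabla_theta_def pullback_form_def by simp

lemma nabla_outside: "b \<notin> OmB 0 \<Longrightarrow> nabla F b = 0"
  unfolding nabla_theta_def by simp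

lemma HomB_mem: "F \<in> HomB \<Longrightarrow> x \<in> OmB 1 \<Longrightarrow> F x \<in> HomAB"
  unfolding homR_def by blast

lemma HomAB_outside: "g \<in> HomAB \<Longrightarrow> b \<notin> OmB 0 \<Longrightarrow> g b = 0"
  unfolding homR_def by blast

lemma ident_add:
  "F \<in> HomB \<Longrightarrow> x \<in> OmB 1 \<Longrightarrow> y \<in> OmB 1 \<Longrightarrow> ident F (x + y) = ident F x + ident F y"
  unfolding ident_def homR_def by simp

lemma ident_mult: "F \<in> HomB \<Longrightarrow> x \<in> OmB 1 \<Longrightarrow> b \<in> OmB 0 \<Longrightarrow> ident F (x * b) = F x b"
  unfolding ident_def homR_def using dga_one_mem[OF dga_B] by (simp add: homAB_act_apply)

lemma ident_mult_th:
  assumes F: "F \<in> HomB" and x: "x \<in> OmB 1" and a: "a \<in> OmA 0"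
  shows "ident F (x * th a) = act (ident F x) a"
proof -
  have "ident F (x * th a) = F x (1 * th a)"
    using ident_mult[OF F x dga_map_mem[OF dga_map_th a]] by simp
  also have "\<dots> = act (F x 1) a"
    using HomB_mem[OF F x] dga_one_mem[OF dga_B] a unfolding homR_def by blast
  finally show ?thesis unfolding ident_def .
qed

lemma pullback_form_in_HomA:
  assumes b: "b \<in> OmB 0"
    and f_add: "\<And>x y. x \<in> OmB 1 \<Longrightarrow> y \<in> OmB 1 \<Longrightarrow> f (x + y) = f x + f y"
    and f_linear: "\<And>x a. x \<in> OmB 1 \<Longrightarrow> a \<in> OmA 0 \<Longrightarrow> f (x * th a) = act (f x) a"
  shows "pullback_form OmA th f b \<in> HomA"
proof -
  have bt: "b * th w \<in> OmB 1" if "w \<in> OmA 1" for w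
    using dga_mult_closed_0_1[OF dga_B b dga_map_mem[OF dga_map_th that]] .
  show ?thesis
    unfolding homR_def pullback_form_def
  proof (intro CollectI conjI ballI allI impI)
    fix x y assume x: "x \<in> OmA 1" and y: "y \<in> OmA 1"
    then show "(if x + y \<in> OmA 1 then f (b * th (x + y)) else 0) =
        (if x \<in> OmA 1 then f (b * th x) else 0) + (if y \<in> OmA 1 then f (b * th y) else 0)"
      using dga_add_closed[OF dga_A x y] f_add[OF bt[OF x] bt[OF y]]
      by (simp add: dga_map_add[OF dga_map_th] distrib_left)
  next
    fix x a assume x: "x \<in> OmA 1" and a: "a \<in> OmA 0"
    then show "(if x * a \<in> OmA 1 then f (b * th (x * a)) else 0) =
        act (if x \<in> OmA 1 then f (b * th x) else 0) a"
      using dga_mult_closed_1_0[OF dga_A x a] f_linear[OF bt[OF x] a]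
      by (simp add: dga_map_mult[OF dga_map_th] mult.assoc)
  qed auto
qed

lemma ident_pullback_form_in_HomA: "F \<in> HomB \<Longrightarrow> b \<in> OmB 0 \<Longrightarrow> pullback_form OmA th (ident F) b \<in> HomA"
  by (rule pullback_form_in_HomA) (simp_all add: ident_add ident_mult_th)

lemma nabla_apply_add:
  assumes F: "F \<in> HomB" and b: "b \<in> OmB 0" and b': "b' \<in> OmB 0"
  shows "nabla F (b + b') = nabla F b + nabla F b'"
proof -
  let ?g = "pullback_form OmA th (ident F)"
  have "?g (b + b') = ?g b + ?g b'"
    using ident_add[OF F] dga_mult_closed_0_1[OF dga_B b] dga_mult_closed_0_1[OF dga_B b']
      dga_map_mem[OF dga_map_th]
    by (auto simp: pullback_form_def distrib_right)
  moreover have "ident F (dB (b + b')) = ident F (dB b) + ident F (dB b')"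
    using ident_add[OF F dga_d_mem_1[OF dga_B b] dga_d_mem_1[OF dga_B b']]
    by (simp add: dga_d_add[OF dga_B])
  ultimately have "nab0 (?g (b + b')) - ident F (dB (b + b')) =
      (nab0 (?g b) - ident F (dB b)) + (nab0 (?g b') - ident F (dB b'))"
    using hom_connection_add[OF hom_connection_nab0
        ident_pullback_form_in_HomA[OF F b] ident_pullback_form_in_HomA[OF F b']]
    by (simp add: algebra_simps)
  then show ?thesis
    using nabla_eq[OF dga_add_closed[OF dga_B b b']] nabla_eq[OF b] nabla_eq[OF b'] by simp
qed

lemma nabla_apply_mult_th:
  assumes F: "F \<in> HomB" and b: "b \<in> OmB 0" and a: "a \<in> OmA 0"
  shows "nabla F (b * th a) = act (nabla F b) a"
proof -
  let ?g = "pullback_form OmA th (ident F)"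
  have tha: "th a \<in> OmB 0" using dga_map_mem[OF dga_map_th a] .
  have "?g (b * th a) = (\<lambda>w. if w \<in> OmA 1 then ?g b (a * w) else 0)"
    using dga_mult_closed_0_1[OF dga_A a]
    by (auto simp: pullback_form_def dga_map_mult[OF dga_map_th] mult.assoc)
  then have nab0_part: "nab0 (?g (b * th a)) = act (nab0 (?g b)) a + ident F (b * th (dA a))"
    using hom_connection_Leibniz[OF hom_connection_nab0 ident_pullback_form_in_HomA[OF F b] a]
      dga_d_mem_1[OF dga_A a]
    by (simp add: pullback_form_def)
  have "ident F (dB (b * th a)) = act (ident F (dB b)) a + ident F (b * th (dA a))"
    using dga_Leibniz_0[OF dga_B b]
      ident_add[OF F dga_mult_closed_1_0[OF dga_B dga_d_mem_1[OF dga_B b] tha]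
        dga_mult_closed_0_1[OF dga_B b dga_d_mem_1[OF dga_B tha]]]
      ident_mult_th[OF F dga_d_mem_1[OF dga_B b] a]
    by (simp add: dga_map_d[OF dga_map_th])
  then have "nabla F (b * th a) = act (nab0 (?g b)) a - act (ident F (dB b)) a"
    using nabla_eq[OF dga_mult_closed_0_0[OF dga_B b tha]] nab0_part by simp
  also have "\<dots> = act (nabla F b) a"
    using right_module_act_diff[OF module_M a] nabla_eq[OF b] by simp
  finally show ?thesis .
qed

lemma nabla_in_HomAB:
  assumes "F \<in> HomB"
  shows "nabla F \<in> HomAB"
  using nabla_apply_add[OF assms] nabla_apply_mult_th[OF assms] nabla_outside[of _ F]
  unfolding homR_def by blast

lemma nabla_add:
  assumes F: "F \<in> HomB" and G: "G \<in> HomB"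
  shows "nabla (F + G) = nabla F + nabla G"
proof
  fix b show "nabla (F + G) b = (nabla F + nabla G) b"
  proof (cases "b \<in> OmB 0")
    case b: True
    have "pullback_form OmA th (ident (F + G)) b =
        pullback_form OmA th (ident F) b + pullback_form OmA th (ident G) b"
      by (auto simp: pullback_form_def ident_def)
    then have "nab0 (pullback_form OmA th (ident (F + G)) b) - ident (F + G) (dB b) =
        (nab0 (pullback_form OmA th (ident F) b) - ident F (dB b)) +
        (nab0 (pullback_form OmA th (ident G) b) - ident G (dB b))"
      using hom_connection_add[OF hom_connection_nab0 ident_pullback_form_in_HomA[OF F b] ident_pullback_form_in_HomA[OF G b]]
      by (simp add: ident_def algebra_simps)
    then show ?thesis
      using nabla_eq[OF b, of "F + G"] nabla_eq[OF b, of F] nabla_eq[OF b, of G] by simp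
  qed (simp add: nabla_outside)
qed

lemma nabla_scalar:
  assumes F: "F \<in> HomB"
  shows "nabla (\<lambda>w. homAB_act (OmB 0) (F w) (smB c 1)) = homAB_act (OmB 0) (nabla F) (smB c 1)"
proof
  define s where "s = smB c 1"
  have s: "s \<in> OmB 0" unfolding s_def using dga_scalar_one_mem[OF dga_B] .
  \<comment> \<open>scalars are central, so f(s x) = f(x s) = F x s\<close>
  have central: "ident F (s * x) = F x s" if "x \<in> OmB 1" for x
    using ident_mult[OF F that s] dga_scalar_eq_mult_left[OF dga_B] dga_scalar_eq_mult_right[OF dga_B]
    unfolding s_def by metis
  have ident_Fs: "ident (\<lambda>w. homAB_act (OmB 0) (F w) s) = (\<lambda>x. F x s)"
    using dga_one_mem[OF dga_B] by (simp add: ident_def homAB_act_apply)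
  fix b show "nabla (\<lambda>w. homAB_act (OmB 0) (F w) (smB c 1)) b = homAB_act (OmB 0) (nabla F) (smB c 1) b"
  proof (cases "b \<in> OmB 0")
    case b: True
    have "pullback_form OmA th (\<lambda>x. F x s) b = pullback_form OmA th (ident F) (s * b)"
      using central dga_mult_closed_0_1[OF dga_B b] dga_map_mem[OF dga_map_th]
      by (auto simp: pullback_form_def mult.assoc)
    moreover have "F (dB b) s = ident F (dB (s * b))"
      using central[OF dga_d_mem_1[OF dga_B b]] dga_d_scalar[OF dga_B]
        dga_scalar_eq_mult_left[OF dga_B] unfolding s_def by metis
    ultimately have "nabla (\<lambda>w. homAB_act (OmB 0) (F w) s) b = nabla F (s * b)"
      using nabla_eq[OF b, of "\<lambda>w. homAB_act (OmB 0) (F w) s"]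
        nabla_eq[OF dga_mult_closed_0_0[OF dga_B s b], of F]
      by (simp add: ident_Fs)
    then show ?thesis
      using b by (simp add: homAB_act_apply flip: s_def)
  qed (simp add: nabla_outside homAB_act_outside)
qed

lemma nabla_Leibniz:
  assumes F: "F \<in> HomB" and b0: "b0 \<in> OmB 0"
  shows "nabla (\<lambda>w. if w \<in> OmB 1 then F (b0 * w) else 0) = homAB_act (OmB 0) (nabla F) b0 + F (dB b0)"
proof
  define F' where "F' = (\<lambda>w. if w \<in> OmB 1 then F (b0 * w) else 0)"
  have ident_F': "ident F' x = ident F (b0 * x)" if "x \<in> OmB 1" for x
    using that unfolding F'_def ident_def by simp
  fix b show "nabla F' b = (homAB_act (OmB 0) (nabla F) b0 + F (dB b0)) b"
  proof (cases "b \<in> OmB 0")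
    case b: True
    have "pullback_form OmA th (ident F') b = pullback_form OmA th (ident F) (b0 * b)"
      using ident_F' dga_mult_closed_0_1[OF dga_B b] dga_map_mem[OF dga_map_th]
      by (auto simp: pullback_form_def mult.assoc)
    then have "nabla F' b = nab0 (pullback_form OmA th (ident F) (b0 * b)) - ident F (b0 * dB b)"
      using nabla_eq[OF b, of F'] ident_F'[OF dga_d_mem_1[OF dga_B b]] by simp
    also have "ident F (b0 * dB b) = ident F (dB (b0 * b)) - F (dB b0) b"
      using dga_Leibniz_0[OF dga_B b0]
        ident_add[OF F dga_mult_closed_1_0[OF dga_B dga_d_mem_1[OF dga_B b0] b]
          dga_mult_closed_0_1[OF dga_B b0 dga_d_mem_1[OF dga_B b]]]
        ident_mult[OF F dga_d_mem_1[OF dga_B b0] b]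
      by simp
    also have "nab0 (pullback_form OmA th (ident F) (b0 * b)) - (ident F (dB (b0 * b)) - F (dB b0) b) =
        nabla F (b0 * b) + F (dB b0) b"
      unfolding nabla_eq[OF dga_mult_closed_0_0[OF dga_B b0 b]] by (simp add: algebra_simps)
    finally have "nabla F' b = nabla F (b0 * b) + F (dB b0) b" .
    then show ?thesis
      using b by (simp add: homAB_act_apply)
  next
    case False
    then show ?thesis
      using HomAB_outside[OF HomB_mem[OF F dga_d_mem_1[OF dga_B b0]]]
      by (simp add: nabla_outside homAB_act_outside)
  qed
qed

theorem hom_connection_nabla: "hom_connection smB OmB dB HomAB (homAB_act (OmB 0)) nabla"
  unfolding hom_connection_def Let_def
  using nabla_in_HomAB nabla_add nabla_scalar nabla_Leibniz by blast

end

theorem mainTheorem4: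
  fixes smA :: "'k::field \<Rightarrow> 'w::ring_1 \<Rightarrow> 'w" and OmA :: "nat \<Rightarrow> 'w set" and dA :: "'w \<Rightarrow> 'w"
    and smB :: "'k \<Rightarrow> 'v::ring_1 \<Rightarrow> 'v" and OmB :: "nat \<Rightarrow> 'v set" and dB :: "'v \<Rightarrow> 'v"
    and th :: "'w \<Rightarrow> 'v"
    and act :: "'m::ab_group_add \<Rightarrow> 'w \<Rightarrow> 'm"
    and nab0 :: "('w \<Rightarrow> 'm) \<Rightarrow> 'm"
  assumes "dga smA OmA dA"
    and "dga smB OmB dB"
    and "dga_map smA OmA dA smB OmB dB th"
    and "right_module (OmA 0) act"
    and "hom_connection smA OmA dA UNIV act nab0"
  shows "hom_connection smB OmB dB
           (homR (OmA 0) (OmB 0) (\<lambda>b a. b * th a) UNIV act)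
           (homAB_act (OmB 0))
           (\<lambda>F. nabla_theta OmA OmB dB th nab0 (ident F))"
proof -
  interpret induced_hom_connection smA OmA dA smB OmB dB th act nab0
    using assms by unfold_locales
  show ?thesis by (rule hom_connection_nabla)
qed

end
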